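(* Let $n\in\mathbb{N}$ and $0\le\alpha<1$. Then $$R_{\mathcal{S}^*_{Ne,n}}(\mathcal{CS}^*_n(\alpha))=\left(\frac{2}{3(1+n-\alpha)+\sqrt{9(1+n-\alpha)^2+4(4-3\alpha)}}\right)^{1/n},$$ and this radius is sharp, i.e. it is the exact value of the radius.
   Context: $\mathbb{D}=\{|z|<1\}$, $\mathbb{D}_r=\{|z|<r\}$. For $n\in\mathbb{N}$, $\mathcal{A}_n$ is the class of analytic functions on $\mathbb{D}$ of the form $f(z)=z+\sum_{k\ge n+1}a_kz^k$; for such $f$ let $\mathcal{Q}_f(z)=zf'(z)/f(z)$. $\mathcal{P}_n$ is the class of analytic $p(z)=1+\sum_{k\ge n}p_kz^k$ on $\mathbb{D}$ with $\mathrm{Re}\,p(z)>0$. $\mathcal{S}^*_n(\alpha)=\{g\in\mathcal{A}_n:\mathrm{Re}\,\mathcal{Q}_g(z)>\alpha,\ z\in\mathbb{D}\}$. The close-to-starlike class of type $\alpha$ is $\mathcal{CS}^*_n(\alpha)=\{f\in\mathcal{A}_n:\ f/g\in\mathcal{P}_n \text{ for some } g\in\mathcal{S}^*_n(\alpha)\}$. Let $\varphi_{Ne}(z)=1+z-z^3/3$ (univalent on $\mathbb{D}$), $\Omega_{Ne}=\varphi_{Ne}(\mathbb{D})$, $\mathcal{S}^*_{Ne}$ the set of $f$ ($f(0)=0,f'(0)=1$) with $\mathcal{Q}_f\prec\varphi_{Ne}$ (i.e. $\mathcal{Q}_f=\varphi_{Ne}\circ w$, $w:\mathbb{D}\to\mathbb{D}$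 analytic, $w(0)=0$), $\mathcal{S}^*_{Ne,n}=\mathcal{S}^*_{Ne}\cap\mathcal{A}_n$. For $\mathcal{G}\subset\mathcal{A}_n$, $R_{\mathcal{S}^*_{Ne,n}}(\mathcal{G})$ is the largest $\rho\in(0,1]$ such that $\mathcal{Q}_f(\mathbb{D}_\rho)\subseteq\Omega_{Ne}$ for all $f\in\mathcal{G}$. *)

theory Defs
  imports "HOL-Analysis.Analysis"
begin

text \<open>Class A_n: f analytic on the unit disc, f(z) = z + sum_{k >= n+1} a_k z^k,
  i.e. f 0 = 0, f'(0) = 1 and the Taylor coefficients of order 2..n vanish.\<close>
definition A_cls :: "nat \<Rightarrow> (complex \<Rightarrow> complex) set" where
  "A_cls n = {f. f holomorphic_on ball 0 1 \<and> f 0 = 0 \<and> deriv f 0 = 1 \<and>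
                 (\<forall>k. 2 \<le> k \<and> k \<le> n \<longrightarrow> (deriv ^^ k) f 0 = 0)}"

definition Qf :: "(complex \<Rightarrow> complex) \<Rightarrow> complex \<Rightarrow> complex" where
  "Qf f z = (if z = 0 then 1 else z * deriv f z / f z)"

text \<open>Class P_n: p(z) = 1 + sum_{k >= n} p_k z^k with positive real part.\<close>
definition P_cls :: "nat \<Rightarrow> (complex \<Rightarrow> complex) set" where
  "P_cls n = {p. p holomorphic_on ball 0 1 \<and> p 0 = 1 \<and>
                 (\<forall>k. 1 \<le> k \<and> k < n \<longrightarrow> (deriv ^^ k) p 0 = 0) \<and>
                 (\<forall>z\<in>ball 0 1. Re (p z) > 0)}"

text \<open>Starlike functions of order alpha in A_n (nonvanishing off the origin, so that Q_g is defined).\<close>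
definition Sstar_cls :: "nat \<Rightarrow> real \<Rightarrow> (complex \<Rightarrow> complex) set" where
  "Sstar_cls n \<alpha> = {g \<in> A_cls n. (\<forall>z\<in>ball 0 1. z \<noteq> 0 \<longrightarrow> g z \<noteq> 0) \<and>
                        (\<forall>z\<in>ball 0 1. Re (Qf g z) > \<alpha>)}"

definition CSstar_cls :: "nat \<Rightarrow> real \<Rightarrow> (complex \<Rightarrow> complex) set" where
  "CSstar_cls n \<alpha> = {f \<in> A_cls n. \<exists>g\<in>Sstar_cls n \<alpha>.
                         (\<lambda>z. if z = 0 then 1 else f z / g z) \<in> P_cls n}"

definition phi_Ne :: "complex \<Rightarrow> complex" where
  "phi_Ne z = 1 + z - z ^ 3 / 3"

definition Omega_Ne :: "complex set" where
  "Omega_Ne = phi_Ne ` ball 0 1"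

definition radius_Ne :: "(complex \<Rightarrow> complex) set \<Rightarrow> real" where
  "radius_Ne G = (GREATEST \<rho>. 0 < \<rho> \<and> \<rho> \<le> 1 \<and>
                     (\<forall>f\<in>G. Qf f ` ball 0 \<rho> \<subseteq> Omega_Ne))"

end

theory Submission
  imports Defs "HOL-Complex_Analysis.Complex_Analysis"
begin

text \<open>
  Write \<open>f = g p\<close> with \<open>g \<in> S*_n(\<alpha>)\<close> and \<open>p \<in> P_n\<close>, so that \<open>Q_f = Q_g + z p'/p\<close>.
  Both \<open>p\<close> and \<open>(Q_g - \<alpha>)/(1 - \<alpha>)\<close> have the form \<open>(1 + z^n \<omega>)/(1 - z^n \<omega>)\<close> with \<open>\<bar>\<omega>\<bar> \<le> 1\<close>
  (Schwarz's lemma, using the zero of order \<open>n\<close>), and the Schwarz--Pick lemma for \<open>\<omega>\<close> then gives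
  \<open>\<bar>Q_f(z) - 1\<bar> \<le> 2(1 - \<alpha>)x/(1 - x) + 2nx/(1 - x\<^sup>2)\<close> with \<open>x = \<bar>z\<bar>^n\<close>.  This bound is below
  \<open>2/3\<close> exactly when \<open>x\<close> is below the positive root of \<open>(4 - 3\<alpha>)x\<^sup>2 + 3(1 + n - \<alpha>)x - 1\<close>,
  and the disc \<open>\<bar>w - 1\<bar> < 2/3\<close> lies in \<open>\<Omega>_Ne\<close> (a fixed point argument for \<open>1 + z - z\<^sup>3/3 = w\<close>).
  For \<open>f(z) = z (1 - z^n)^(-2(1-\<alpha>)/n) (1 + z^n)/(1 - z^n)\<close> the bound is attained on the positive axis,
  where \<open>Q_f\<close> reaches \<open>5/3\<close> at the radius, whereas real points of \<open>\<Omega>_Ne\<close> are smaller than \<open>5/3\<close>.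
\<close>

section \<open>The region \<open>\<Omega>_Ne\<close>\<close>

lemma norm_cube_diff_le:
  fixes x y :: complex
  assumes "cmod x \<le> \<rho>" "cmod y \<le> \<rho>"
  shows "cmod (x^3 - y^3) \<le> 3 * \<rho>^2 * cmod (x - y)"
proof -
  have "cmod (x^2 + x*y + y^2) \<le> cmod (x^2 + x*y) + cmod (y^2)"
    by (rule norm_triangle_ineq)
  also have "\<dots> \<le> cmod (x^2) + cmod (x*y) + cmod (y^2)"
    using norm_triangle_ineq[of "x^2" "x*y"] by simp
  also have "\<dots> = cmod x ^ 2 + cmod x * cmod y + cmod y ^ 2"
    by (simp add: norm_mult norm_power)
  also have "\<dots> \<le> \<rho>^2 + \<rho> * \<rho> + \<rho>^2"
    using assms order_trans[OF norm_ge_zero assms(1)] by (intro add_mono mult_mono power_mono) auto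
  finally have "cmod (x^2 + x*y + y^2) \<le> 3 * \<rho>^2"
    by (simp add: power2_eq_square)
  moreover have "x^3 - y^3 = (x - y) * (x^2 + x*y + y^2)"
    by (simp add: power2_eq_square power3_eq_cube algebra_simps)
  ultimately show ?thesis
    by (simp add: norm_mult mult.commute mult_left_mono)
qed

lemma Omega_Ne_contains_disc:
  assumes "cmod (w - 1) < 2/3"
  shows "w \<in> Omega_Ne"
proof -
  define c where "c = w - 1"
  define \<rho> where "\<rho> = 1 - sqrt (2/3 - cmod c)"
  have "0 < 2/3 - cmod c" "2/3 - cmod c < 1"
    unfolding c_def using assms norm_ge_zero[of "w - 1"] by linarith+
  then have \<rho>: "0 < \<rho>" "\<rho> < 1"
    by (simp_all add: \<rho>_def)
  have "(1 - \<rho>)^2 = 2/3 - cmod c"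
    using assms by (simp add: \<rho>_def c_def)
  moreover have "2/3 - (\<rho> - \<rho>^3/3) = (1 - \<rho>)^2 * (2 + \<rho>) / 3"
    by (simp add: power2_eq_square power3_eq_cube algebra_simps)
  moreover have "(1 - \<rho>)^2 * (2 + \<rho>) / 3 \<le> (1 - \<rho>)^2"
    using \<rho> by (simp add: divide_le_eq mult_left_le)
  ultimately have small: "cmod c + \<rho>^3/3 \<le> \<rho>"
    by linarith
  \<comment> \<open>\<open>phi_Ne z = w\<close> means that \<open>z\<close> is a fixed point of \<open>T\<close>, a contraction of \<open>cball 0 \<rho>\<close>.\<close>
  define T where "T z = c + z^3/3" for z :: complex
  have "T ` cball 0 \<rho> \<subseteq> cball 0 \<rho>"
  proof clarify
    fix z :: complex assume "z \<in> cball 0 \<rho>"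
    then have "cmod (z^3) \<le> \<rho>^3"
      by (simp add: norm_power power_mono)
    then have "cmod (T z) \<le> cmod c + \<rho>^3/3"
      using norm_triangle_ineq[of c "z^3/3"] by (simp add: T_def norm_divide)
    with small show "T z \<in> cball 0 \<rho>"
      by simp
  qed
  moreover have "dist (T x) (T y) \<le> \<rho>^2 * dist x y" if "x \<in> cball 0 \<rho>" "y \<in> cball 0 \<rho>" for x y
  proof -
    have "dist (T x) (T y) = cmod (x^3 - y^3) / 3"
      by (simp add: T_def dist_norm norm_divide flip: diff_divide_distrib)
    then show ?thesis
      using norm_cube_diff_le[of x \<rho> y] that by (simp add: dist_norm)
  qed
  ultimately obtain z where z: "z \<in> cball 0 \<rho>" "T z = z"
    using Banach_fix[of "cball 0 \<rho>" "\<rho>^2" T] \<rho>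
    by (auto simp: complete_eq_closed power_less_one_iff)
  then have "phi_Ne z = w"
    by (simp add: phi_Ne_def T_def c_def algebra_simps)
  moreover have "z \<in> ball 0 1"
    using z(1) \<rho> by simp
  ultimately show ?thesis
    unfolding Omega_Ne_def by blast
qed

lemma Omega_Ne_real_lt:
  assumes "w \<in> Omega_Ne" "Im w = 0"
  shows "Re w < 5/3"
proof -
  obtain z where z: "cmod z < 1" "w = phi_Ne z"
    using assms(1) unfolding Omega_Ne_def by auto
  define x y where "x = Re z" and "y = Im z"
  have x: "\<bar>x\<bar> < 1"
    using abs_Re_le_cmod[of z] z(1) by (simp add: x_def)
  have "Im w = y * (1 - x^2 + y^2/3)"
    by (simp add: z(2) phi_Ne_def x_def y_def power2_eq_square power3_eq_cube field_simps)
  moreover have "x^2 < 1"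
    using x by (simp add: abs_square_less_1)
  then have "1 - x^2 + y^2/3 > 0"
    using zero_le_power2[of y] by linarith
  ultimately have "y = 0"
    using assms(2) by simp
  then have "Re w = 1 + x - x^3/3"
    by (simp add: z(2) phi_Ne_def x_def y_def power2_eq_square power3_eq_cube algebra_simps)
  moreover have "2/3 - x + x^3/3 = (1 - x)^2 * (2 + x) / 3"
    by (simp add: power2_eq_square power3_eq_cube algebra_simps)
  moreover have "(1 - x)^2 * (2 + x) / 3 > 0"
    using x by auto
  ultimately show ?thesis
    by linarith
qed

section \<open>Holomorphic functions on the unit disc\<close>

lemma eventually_nhds_ball:
  assumes "w \<in> ball c r" "\<And>x. x \<in> ball c r \<Longrightarrow> P x"
  shows "eventually P (nhds w)"
  using eventually_mono[OF eventually_nhds_in_open[OF open_ball assms(1)]] assms(2) by blast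

lemma holomorphic_Taylor_remainder:
  assumes holf: "f holomorphic_on ball 0 r"
  obtains K where "K holomorphic_on ball 0 r"
    "\<And>w. w \<in> ball 0 r \<Longrightarrow> f w = (\<Sum>i<m. (deriv^^i) f 0 / fact i * w^i) + w^m * K w"
proof -
  define a where "a i = (deriv ^^ i) f 0 / fact i" for i
  define K where "K w = (\<Sum>i. a (i + m) * w^i)" for w
  have sums: "(\<lambda>i. a (i + m) * w^i) sums K w"
    and expand: "f w = (\<Sum>i<m. a i * w^i) + w^m * K w" if w: "w \<in> ball 0 r" for w
  proof -
    have "(\<lambda>i. a i * w^i) sums f w"
      using holomorphic_power_series[OF holf w] by (simp add: a_def)
    then have tail: "(\<lambda>i. a (i + m) * w^(i + m)) sums (f w - (\<Sum>i<m. a i * w^i))"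
      by (subst sums_iff_shift) simp
    have "summable (\<lambda>i. a (i + m) * w^i)"
    proof (cases "w = 0")
      case False
      have "summable (\<lambda>i. a (i + m) * w^(i + m) * (1 / w^m))"
        using summable_mult2[OF sums_summable[OF tail]] .
      then show ?thesis
        using False by (simp add: power_add)
    qed (auto simp: power_0_left intro!: summable_finite[of "{0}"] split: if_split_asm)
    then show Ksums: "(\<lambda>i. a (i + m) * w^i) sums K w"
      by (simp add: summable_sums_iff K_def)
    have "(\<lambda>i. a (i + m) * w^(i + m)) sums (w^m * K w)"
      using sums_mult[OF Ksums, of "w^m"] by (simp add: power_add mult_ac)
    then show "f w = (\<Sum>i<m. a i * w^i) + w^m * K w"
      using sums_unique2[OF tail] by (simp add: algebra_simps)
  qed
  have "K holomorphic_on ball 0 r"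
    using power_series_holomorphic[of 0 r "\<lambda>i. a (i + m)" K] sums by simp
  then show ?thesis
    using that expand by (simp add: a_def)
qed

lemma A_cls_factor:
  assumes "n \<ge> 1" "g \<in> A_cls n"
  obtains K where "K holomorphic_on ball 0 1" "\<And>w. w \<in> ball 0 1 \<Longrightarrow> g w = w + w^(n+1) * K w"
proof -
  obtain K where K: "K holomorphic_on ball 0 1"
    "\<And>w. w \<in> ball 0 1 \<Longrightarrow> g w = (\<Sum>i<n+1. (deriv^^i) g 0 / fact i * w^i) + w^(n+1) * K w"
    using holomorphic_Taylor_remainder[of g] assms(2) unfolding A_cls_def by blast
  have "(\<Sum>i<n+1. (deriv^^i) g 0 / fact i * w^i) = (\<Sum>i<n+1. if i = 1 then w else 0)" for w
  proof (intro sum.cong refl)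
    fix i assume "i \<in> {..<n+1}"
    then consider "i = 0" | "i = 1" | "2 \<le> i" "i \<le> n"
      by fastforce
    then show "(deriv^^i) g 0 / fact i * w^i = (if i = 1 then w else 0)"
      using assms(2) by cases (auto simp: A_cls_def)
  qed
  then show ?thesis
    using that K assms(1) by simp
qed

lemma P_cls_factor:
  assumes "n \<ge> 1" "p \<in> P_cls n"
  obtains H where "H holomorphic_on ball 0 1" "\<And>w. w \<in> ball 0 1 \<Longrightarrow> p w = 1 + w^n * H w"
proof -
  obtain H where H: "H holomorphic_on ball 0 1"
    "\<And>w. w \<in> ball 0 1 \<Longrightarrow> p w = (\<Sum>i<n. (deriv^^i) p 0 / fact i * w^i) + w^n * H w"
    using holomorphic_Taylor_remainder[of p] assms(2) unfolding P_cls_def by blast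
  have "(\<Sum>i<n. (deriv^^i) p 0 / fact i * w^i) = (\<Sum>i<n. if i = 0 then 1 else 0)" for w
    using assms(2) unfolding P_cls_def by (intro sum.cong) auto
  then show ?thesis
    using that H assms(1) by simp
qed

lemma Schwarz_Lemma_power:
  assumes hol: "\<omega> holomorphic_on ball 0 1"
    and lt: "\<And>z. z \<in> ball 0 1 \<Longrightarrow> cmod (z^n * \<omega> z) < 1"
    and z: "z \<in> ball 0 1"
  shows "cmod (\<omega> z) \<le> 1"
proof -
  have bound: "cmod (\<omega> z) \<le> inverse (r^n)" if r: "cmod z < r" "r < 1" for r
  proof -
    have "0 < r"
      using r(1) norm_ge_zero[of z] by linarith
    moreover have "\<omega> holomorphic_on ball 0 r" "continuous_on (cball 0 r) \<omega>"
      using r(2) by (auto intro!: holomorphic_on_subset[OF hol] holomorphic_on_imp_continuous_on)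
    ultimately obtain w where w: "cmod w = r" and max: "\<And>x. cmod x \<le> r \<Longrightarrow> cmod (\<omega> x) \<le> cmod (\<omega> w)"
      using Schwarz1[of \<omega> "ball 0 r"] by auto
    have "r^n * cmod (\<omega> z) \<le> r^n * cmod (\<omega> w)"
      using max[of z] r(1) \<open>0 < r\<close> by (intro mult_left_mono) auto
    also have "\<dots> < 1"
      using lt[of w] w r(2) by (simp add: norm_mult norm_power)
    finally show ?thesis
      using \<open>0 < r\<close> by (simp add: field_simps)
  qed
  have "eventually (\<lambda>r. cmod (\<omega> z) \<le> inverse (r^n)) (at_left 1)"
    using z by (intro eventually_at_leftI[of "cmod z"] bound) auto
  moreover have "((\<lambda>r. inverse (r^n)) \<longlongrightarrow> inverse (1^n)) (at_left (1::real))"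
    by (intro tendsto_intros) auto
  ultimately show ?thesis
    using tendsto_lowerbound by fastforce
qed

lemma Moebius_function_has_field_derivative:
  assumes "cnj w * z \<noteq> 1"
  shows "(Moebius_function 0 w has_field_derivative (1 - cnj w * w) / (1 - cnj w * z)^2) (at z)"
proof -
  have "Moebius_function 0 w = (\<lambda>z. (z - w) / (1 - cnj w * z))"
    by (simp add: fun_eq_iff Moebius_function_simple)
  then show ?thesis
    using assms by (auto intro!: derivative_eq_intros simp: field_simps power2_eq_square)
qed

lemma Moebius_function_deriv_values:
  assumes "cmod w < 1"
  shows "(Moebius_function 0 w has_field_derivative of_real (1 / (1 - cmod w^2))) (at w)"
    and "(Moebius_function 0 (- w) has_field_derivative of_real (1 - cmod w^2)) (at 0)"
proof -
  have norm_sq: "cnj w * w = of_real (cmod w^2)"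
    using complex_norm_square[of w] by (simp add: mult.commute)
  have "cmod w^2 < 1"
    using assms by (simp add: abs_square_less_1)
  moreover from this have "cnj w * w \<noteq> 1"
    unfolding norm_sq of_real_eq_1_iff by simp
  ultimately show "(Moebius_function 0 w has_field_derivative of_real (1 / (1 - cmod w^2))) (at w)"
    using Moebius_function_has_field_derivative[of w w] by (simp add: norm_sq power2_eq_square)
  show "(Moebius_function 0 (- w) has_field_derivative of_real (1 - cmod w^2)) (at 0)"
    using Moebius_function_has_field_derivative[of "- w" 0] by (simp add: norm_sq)
qed

lemma Schwarz_Pick_strict:
  assumes hol: "\<omega> holomorphic_on ball 0 1"
    and lt: "\<And>z. z \<in> ball 0 1 \<Longrightarrow> cmod (\<omega> z) < 1"
    and z0: "z0 \<in> ball 0 1"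
  shows "cmod (deriv \<omega> z0) \<le> (1 - cmod (\<omega> z0)^2) / (1 - cmod z0^2)"
proof -
  define b where "b = \<omega> z0"
  define M where "M = Moebius_function 0 (- z0)"
  \<comment> \<open>\<open>h\<close> maps the disc into itself and fixes the origin, so Schwarz's lemma bounds \<open>h' 0\<close>.\<close>
  define h where "h = Moebius_function 0 b \<circ> \<omega> \<circ> M"
  have b: "cmod b < 1" and z0': "cmod z0 < 1"
    using lt z0 by (auto simp: b_def)
  have M: "M \<zeta> \<in> ball 0 1" if "\<zeta> \<in> ball 0 1" for \<zeta>
    using Moebius_function_norm_lt_1[of "- z0" \<zeta> 0] z0' that by (simp add: M_def)
  have "h holomorphic_on ball 0 1"
    unfolding h_def using M lt z0' b
    by (intro holomorphic_on_compose holomorphic_on_subset[OF Moebius_function_holomorphic[of b 0]]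
        holomorphic_on_subset[OF hol]) (auto simp: M_def intro!: Moebius_function_holomorphic)
  moreover have M0: "M 0 = z0"
    by (simp add: M_def Moebius_function_simple)
  then have "h 0 = 0"
    by (simp add: h_def b_def Moebius_function_eq_zero)
  moreover have "cmod (h z) < 1" if "cmod z < 1" for z
    using Moebius_function_norm_lt_1[OF b] lt M that by (simp add: h_def)
  ultimately have "cmod (deriv h 0) \<le> 1"
    using Schwarz_Lemma(2)[of h 0] by simp
  have "(Moebius_function 0 b \<circ> \<omega> has_field_derivative of_real (1 / (1 - cmod b^2)) * deriv \<omega> z0) (at z0)"
    using DERIV_chain[OF Moebius_function_deriv_values(1)[OF b, unfolded b_def] holomorphic_derivI[OF hol open_ball z0]]
    by (simp add: b_def)
  then have "(h has_field_derivative of_real (1 / (1 - cmod b^2)) * deriv \<omega> z0 * of_real (1 - cmod z0^2)) (at 0)"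
    unfolding h_def M_def using DERIV_chain[OF _ Moebius_function_deriv_values(2)[OF z0']] M0
    by (simp only: M_def)
  moreover have "0 < 1 - cmod b^2" "0 < 1 - cmod z0^2"
    using b z0' by (simp_all add: abs_square_less_1)
  ultimately have "cmod (deriv h 0) = cmod (deriv \<omega> z0) * (1 - cmod z0^2) / (1 - cmod b^2)"
    by (simp only: DERIV_imp_deriv norm_mult norm_of_real) simp
  with \<open>cmod (deriv h 0) \<le> 1\<close> \<open>0 < 1 - cmod b^2\<close> \<open>0 < 1 - cmod z0^2\<close> show ?thesis
    by (simp add: b_def field_simps)
qed

lemma Schwarz_Pick:
  assumes hol: "\<omega> holomorphic_on ball 0 1"
    and le: "\<And>z. z \<in> ball 0 1 \<Longrightarrow> cmod (\<omega> z) \<le> 1"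
    and z0: "z0 \<in> ball 0 1"
  shows "cmod (deriv \<omega> z0) \<le> (1 - cmod (\<omega> z0)^2) / (1 - cmod z0^2)"
proof (cases "\<exists>z1\<in>ball 0 1. cmod (\<omega> z1) = 1")
  case True
  then obtain z1 where z1: "z1 \<in> ball 0 1" "cmod (\<omega> z1) = 1"
    by blast
  have "\<omega> constant_on ball 0 1"
    using le z1 by (intro maximum_modulus_principle[OF hol _ _ open_ball order_refl z1(1)]) auto
  then obtain c where c: "\<And>x. x \<in> ball 0 1 \<Longrightarrow> \<omega> x = c"
    by (auto simp: constant_on_def)
  then have "deriv \<omega> z0 = deriv (\<lambda>_. c) z0"
    by (intro deriv_cong_ev eventually_nhds_ball[OF z0]) auto
  moreover have "cmod (\<omega> z0) = 1"
    using c z0 z1 by auto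
  ultimately show ?thesis
    by simp
next
  case False
  with le have "cmod (\<omega> z) < 1" if "z \<in> ball 0 1" for z
    using that by force
  then show ?thesis
    by (rule Schwarz_Pick_strict[OF hol _ z0])
qed

section \<open>Functions with positive real part\<close>

lemma sum_odd_powers_le:
  fixes r :: real
  assumes "0 \<le> r" "r \<le> 1"
  shows "(\<Sum>j<n. r^(2*j+1)) \<le> n" and "2 * (\<Sum>j<n. r^(2*j+1)) \<le> n * (1 + r^(2*n))"
proof -
  have "(\<Sum>j<n. r^(2*j+1)) \<le> (\<Sum>j<n. 1)"
    using assms by (intro sum_mono power_le_one) auto
  then show "(\<Sum>j<n. r^(2*j+1)) \<le> n"
    by simp
  \<comment> \<open>Pair the \<open>j\<close>-th term with the \<open>(n-1-j)\<close>-th and use \<open>r^a + r^b \<le> 1 + r^(a+b)\<close>.\<close>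
  have pair: "r^a + r^b \<le> 1 + r^(a+b)" for a b
  proof -
    have "0 \<le> (1 - r^a) * (1 - r^b)"
      using assms by (simp add: power_le_one)
    then show ?thesis
      by (simp add: algebra_simps power_add)
  qed
  have "2 * (\<Sum>j<n. r^(2*j+1)) = (\<Sum>j<n. r^(2*j+1) + r^(2*(n - Suc j)+1))"
    using sum.nat_diff_reindex[of "\<lambda>j. r^(2*j+1)" n] by (simp add: sum.distrib)
  also have "\<dots> \<le> (\<Sum>j<n. 1 + r^(2*n))"
  proof (intro sum_mono)
    fix j assume "j \<in> {..<n}"
    then have "(2*j+1) + (2*(n - Suc j)+1) = 2*n"
      by auto
    then show "r^(2*j+1) + r^(2*(n - Suc j)+1) \<le> 1 + r^(2*n)"
      using pair[of "2*j+1" "2*(n - Suc j)+1"] by simp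
  qed
  finally show "2 * (\<Sum>j<n. r^(2*j+1)) \<le> n * (1 + r^(2*n))"
    by simp
qed

text \<open>Here \<open>r = \<bar>z\<bar>\<close> and \<open>t = \<bar>\<omega> z\<bar>\<close>; the left-hand side is what the Schwarz--Pick estimate gives
  for \<open>\<bar>z p'/p\<bar>/2\<close> when \<open>p = (1 + z^n \<omega>)/(1 - z^n \<omega>)\<close>.\<close>

lemma Schwarz_Pick_power_ineq:
  fixes r t :: real
  assumes r: "0 \<le> r" "r < 1" and t: "0 \<le> t" "t \<le> 1" and n: "n \<ge> 1"
  shows "(n * r^n * t + r * r^n * (1 - t^2) / (1 - r^2)) / (1 - r^(2*n) * t^2) \<le> n * r^n / (1 - r^(2*n))"
proof -
  define s where "s = r^n"
  define \<Phi> where "\<Phi> = (\<Sum>j<n. r^(2*j+1))"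
  have s: "0 \<le> s" "s < 1"
    using r n by (auto simp: s_def power_less_one_iff)
  have r2n: "r^(2*n) = s^2"
    by (simp add: s_def power_mult[symmetric] mult.commute)
  have r2: "0 < 1 - r^2" and s2: "0 < 1 - s^2"
    using r s by (simp_all add: abs_square_less_1)
  have "s^2 * t^2 \<le> s^2"
    using t by (simp add: mult_left_le power_le_one)
  then have st: "0 < 1 - s^2 * t^2"
    using s2 by linarith
  have "\<Phi> = r * (\<Sum>j<n. (r^2)^j)" and "s^2 = (r^2)^n"
    by (simp_all add: \<Phi>_def s_def sum_distrib_left power_add mult.commute flip: power_mult)
  then have "r * (1 - s^2) = (1 - r^2) * \<Phi>"
    using one_diff_power_eq[of "r^2" n] by simp
  then have \<Phi>: "r / (1 - r^2) = \<Phi> / (1 - s^2)"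
    using r2 s2 by (simp add: field_simps)
  have key: "n * t * (1 - s^2) + (1 - t^2) * \<Phi> \<le> n * (1 - s^2 * t^2)"
  proof -
    have "0 \<le> (1 - t) * ((1 - t) * (n - \<Phi>) + t * (n * (1 + s^2) - 2 * \<Phi>))"
      using t sum_odd_powers_le[of r n] r by (simp add: \<Phi>_def r2n)
    moreover have "n * (1 - s^2 * t^2) - (n * t * (1 - s^2) + (1 - t^2) * \<Phi>)
        = (1 - t) * ((1 - t) * (n - \<Phi>) + t * (n * (1 + s^2) - 2 * \<Phi>))"
      by (simp add: algebra_simps power2_eq_square)
    ultimately show ?thesis
      by linarith
  qed
  have e: "r * s * (1 - t^2) / (1 - r^2) = s * (1 - t^2) * (\<Phi> / (1 - s^2))"
    by (simp flip: \<Phi>)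
  have "(n * s * t + r * s * (1 - t^2) / (1 - r^2)) / (1 - s^2 * t^2)
      = s * (n * t * (1 - s^2) + (1 - t^2) * \<Phi>) / ((1 - s^2) * (1 - s^2 * t^2))"
    unfolding e using s2 st by (simp add: field_simps)
  also have "\<dots> \<le> n * s / (1 - s^2)"
    using mult_left_mono[OF key s(1)] s2 st by (simp add: divide_le_eq mult_ac)
  finally show ?thesis
    by (simp add: s_def r2n[unfolded s_def])
qed

lemma norm_diff_one_lt_norm_add_one:
  assumes "Re u > 0"
  shows "cmod (u - 1) < cmod (u + 1)"
proof -
  have "cmod (u - 1)^2 = (Re u - 1)^2 + (Im u)^2" "cmod (u + 1)^2 = (Re u + 1)^2 + (Im u)^2"
    by (simp_all add: cmod_power2)
  moreover have "(Re u - 1)^2 < (Re u + 1)^2"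
    using assms by (simp add: power2_eq_square algebra_simps)
  ultimately have "cmod (u - 1)^2 < cmod (u + 1)^2"
    by simp
  then show ?thesis
    by (rule power2_less_imp_less) simp
qed

lemma Re_pos_power_Schwarz_representation:
  assumes holH: "H holomorphic_on ball 0 1"
    and re: "\<And>z. z \<in> ball 0 1 \<Longrightarrow> Re (1 + z^n * H z) > 0"
  obtains \<omega> where "\<omega> holomorphic_on ball 0 1" "\<And>z. z \<in> ball 0 1 \<Longrightarrow> cmod (\<omega> z) \<le> 1"
    "\<And>z. z \<in> ball 0 1 \<Longrightarrow> 1 + z^n * H z = (1 + z^n * \<omega> z) / (1 - z^n * \<omega> z)"
proof -
  define u where "u z = z^n * H z" for z
  have lt: "cmod (u z) < cmod (2 + u z)" if "z \<in> ball 0 1" for z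
    using norm_diff_one_lt_norm_add_one[of "1 + u z"] re[OF that] by (simp add: u_def add.commute)
  then have nz: "2 + u z \<noteq> 0" if "z \<in> ball 0 1" for z
    using that by fastforce
  \<comment> \<open>\<open>z^n \<omega> z = (p - 1)/(p + 1)\<close> is the inverse Cayley transform of \<open>p = 1 + u\<close>.\<close>
  define \<omega> where "\<omega> z = H z / (2 + u z)" for z
  have hol: "\<omega> holomorphic_on ball 0 1"
    unfolding \<omega>_def u_def using nz unfolding u_def by (intro holomorphic_intros holH) auto
  have q: "z^n * \<omega> z = u z / (2 + u z)" for z
    by (simp add: \<omega>_def u_def)
  have "cmod (z^n * \<omega> z) < 1" if "z \<in> ball 0 1" for z
    using lt[OF that] nz[OF that] by (simp add: q norm_divide divide_less_eq)
  then have "cmod (\<omega> z) \<le> 1" if "z \<in> ball 0 1" for z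
    using Schwarz_Lemma_power[OF hol _ that] by blast
  moreover have "1 + z^n * H z = (1 + z^n * \<omega> z) / (1 - z^n * \<omega> z)" if "z \<in> ball 0 1" for z
  proof -
    have "1 + z^n * \<omega> z = 2 * (1 + u z) / (2 + u z)" "1 - z^n * \<omega> z = 2 / (2 + u z)"
      unfolding q using nz[OF that] by (simp_all add: field_simps)
    then show ?thesis
      using nz[OF that] by (simp add: u_def)
  qed
  ultimately show ?thesis
    using that hol by blast
qed

lemma Cayley_power_dist_one_le:
  assumes "n \<ge> 1" "cmod (\<omega> z) \<le> 1" "cmod z < 1"
  shows "cmod ((1 + z^n * \<omega> z) / (1 - z^n * \<omega> z) - 1) \<le> 2 * cmod z^n / (1 - cmod z^n)"
proof -
  define q where "q = z^n * \<omega> z"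
  have s: "cmod z^n < 1"
    using assms by (simp add: power_less_one_iff)
  have "cmod q \<le> cmod z^n"
    using assms(2) by (simp add: q_def norm_mult norm_power mult_left_le)
  moreover have "1 - cmod q \<le> cmod (1 - q)"
    using norm_triangle_ineq2[of 1 q] by simp
  ultimately have "1 - cmod z^n \<le> cmod (1 - q)"
    by linarith
  moreover have "q \<noteq> 1"
    using s \<open>cmod q \<le> cmod z^n\<close> by auto
  then have "(1 + q) / (1 - q) - 1 = 2 * q / (1 - q)"
    by (simp add: field_simps)
  ultimately show ?thesis
    using s \<open>cmod q \<le> cmod z^n\<close>
    by (auto simp: q_def[symmetric] norm_divide intro!: frac_le)
qed

lemma Cayley_logderiv:
  fixes q :: "complex \<Rightarrow> complex"
  assumes "(q has_field_derivative q') (at z)" "q z \<noteq> 1" "q z \<noteq> -1"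
  shows "z * deriv (\<lambda>w. (1 + q w) / (1 - q w)) z / ((1 + q z) / (1 - q z))
           = 2 * (z * q') / ((1 - q z) * (1 + q z))"
proof -
  have "((\<lambda>w. (1 + q w) / (1 - q w)) has_field_derivative 2 * q' / (1 - q z)^2) (at z)"
    using assms by (auto intro!: derivative_eq_intros simp: field_simps power2_eq_square)
  moreover have "1 - q z \<noteq> 0" "1 + q z \<noteq> 0"
    using assms(2,3) by (auto simp: add_eq_0_iff)
  moreover have "z * (2 * q' / b^2) / (c / b) = 2 * (z * q') / (b * c)" if "b \<noteq> 0" "c \<noteq> 0" for b c
    using that by (simp add: field_simps power2_eq_square)
  ultimately show ?thesis
    by (simp add: DERIV_imp_deriv)
qed

lemma norm_mult_deriv_power_mult_le:
  assumes n: "n \<ge> 1" and hol: "\<omega> holomorphic_on ball 0 1"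
    and le: "\<And>z. z \<in> ball 0 1 \<Longrightarrow> cmod (\<omega> z) \<le> 1" and z: "z \<in> ball 0 1"
  shows "cmod (z * (n * z^(n - 1) * \<omega> z + deriv \<omega> z * z^n))
           \<le> n * cmod z^n * cmod (\<omega> z) + cmod z * cmod z^n * (1 - cmod (\<omega> z)^2) / (1 - cmod z^2)"
proof -
  have "z * (n * z^(n - 1) * \<omega> z + deriv \<omega> z * z^n) = n * (z^n * \<omega> z) + z^(n+1) * deriv \<omega> z"
    using n by (cases n) (auto simp: algebra_simps)
  then have "cmod (z * (n * z^(n - 1) * \<omega> z + deriv \<omega> z * z^n))
      \<le> cmod (of_nat n * (z^n * \<omega> z)) + cmod (z^(n+1) * deriv \<omega> z)"
    by (simp only: norm_triangle_ineq)
  also have "\<dots> = n * (cmod z^n * cmod (\<omega> z)) + cmod z^(n+1) * cmod (deriv \<omega> z)"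
    by (simp add: norm_mult norm_power)
  also have "\<dots> \<le> n * (cmod z^n * cmod (\<omega> z)) + cmod z^(n+1) * ((1 - cmod (\<omega> z)^2) / (1 - cmod z^2))"
    using Schwarz_Pick[OF hol le z] by (intro add_left_mono mult_left_mono) auto
  finally show ?thesis
    by simp
qed

lemma Cayley_power_logderiv_le:
  assumes n: "n \<ge> 1" and hol: "\<omega> holomorphic_on ball 0 1"
    and le: "\<And>z. z \<in> ball 0 1 \<Longrightarrow> cmod (\<omega> z) \<le> 1" and z: "z \<in> ball 0 1"
  shows "cmod (z * deriv (\<lambda>z. (1 + z^n * \<omega> z) / (1 - z^n * \<omega> z)) z / ((1 + z^n * \<omega> z) / (1 - z^n * \<omega> z)))
           \<le> 2 * real n * cmod z^n / (1 - cmod z^(2*n))"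
proof -
  define r t where "r = cmod z" and "t = cmod (\<omega> z)"
  define q where "q z = z^n * \<omega> z" for z
  define q' where "q' = n * z^(n - 1) * \<omega> z + deriv \<omega> z * z^n"
  have r: "0 \<le> r" "r < 1" and t: "0 \<le> t" "t \<le> 1"
    using z le[OF z] by (auto simp: r_def t_def)
  have nq: "cmod (q z) = r^n * t"
    by (simp add: q_def r_def t_def norm_mult norm_power)
  have "r^n < 1"
    using r n power_strict_mono[of r 1 n] by simp
  then have "r^n * t < 1"
    using mult_left_le[of t "r^n"] r t by simp
  then have "q z \<noteq> 1" "q z \<noteq> -1"
    using nq by auto
  moreover have "(q has_field_derivative q') (at z)"
    using DERIV_mult[OF DERIV_power[OF DERIV_ident] holomorphic_derivI[OF hol open_ball z]]
    by (simp add: q_def[abs_def] q'_def)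
  ultimately have logderiv: "z * deriv (\<lambda>z. (1 + q z) / (1 - q z)) z / ((1 + q z) / (1 - q z))
      = 2 * (z * q') / ((1 - q z) * (1 + q z))"
    using Cayley_logderiv by blast
  have num: "cmod (z * q') \<le> n * r^n * t + r * r^n * (1 - t^2) / (1 - r^2)"
    using norm_mult_deriv_power_mult_le[OF n hol le z] by (simp add: q'_def r_def t_def)
  have sq: "r^(2*n) * t^2 = (r^n * t)^2"
    by (metis power_mult power_mult_distrib mult.commute)
  have "1 - cmod (q z ^ 2) \<le> cmod (1 - q z ^ 2)"
    using norm_triangle_ineq2[of 1 "q z ^ 2"] by simp
  moreover have "(1 - q z) * (1 + q z) = 1 - q z ^ 2"
    by (simp add: algebra_simps power2_eq_square)
  ultimately have den: "1 - r^(2*n) * t^2 \<le> cmod ((1 - q z) * (1 + q z))"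
    by (simp add: sq norm_power nq)
  have "1 - r^(2*n) * t^2 > 0"
    using \<open>r^n * t < 1\<close> r t by (simp add: sq abs_square_less_1)
  moreover have "0 \<le> n * r^n * t + r * r^n * (1 - t^2) / (1 - r^2)"
    using r t by (intro add_nonneg_nonneg mult_nonneg_nonneg divide_nonneg_pos)
      (auto simp: abs_square_less_1 power_le_one)
  ultimately have "cmod (2 * (z * q') / ((1 - q z) * (1 + q z)))
      \<le> 2 * ((n * r^n * t + r * r^n * (1 - t^2) / (1 - r^2)) / (1 - r^(2*n) * t^2))"
    using num den by (simp add: norm_divide norm_mult frac_le)
  also have "\<dots> \<le> 2 * (n * r^n / (1 - r^(2*n)))"
    by (rule mult_left_mono[OF Schwarz_Pick_power_ineq[OF r t n]]) simp
  finally show ?thesis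
    using logderiv by (simp add: q_def r_def)
qed

lemma Re_pos_power_bounds:
  assumes n: "n \<ge> 1" and holH: "H holomorphic_on ball 0 1"
    and re: "\<And>z. z \<in> ball 0 1 \<Longrightarrow> Re (1 + z^n * H z) > 0" and z: "z \<in> ball 0 1"
  shows "cmod (z^n * H z) \<le> 2 * cmod z^n / (1 - cmod z^n)"
    and "cmod (z * deriv (\<lambda>z. 1 + z^n * H z) z / (1 + z^n * H z)) \<le> 2 * real n * cmod z^n / (1 - cmod z^(2*n))"
proof -
  obtain \<omega> where hol: "\<omega> holomorphic_on ball 0 1" and le: "\<And>z. z \<in> ball 0 1 \<Longrightarrow> cmod (\<omega> z) \<le> 1"
    and eq: "\<And>z. z \<in> ball 0 1 \<Longrightarrow> 1 + z^n * H z = (1 + z^n * \<omega> z) / (1 - z^n * \<omega> z)"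
    using Re_pos_power_Schwarz_representation[OF holH re] by blast
  have "z^n * H z = (1 + z^n * \<omega> z) / (1 - z^n * \<omega> z) - 1"
    using eq[OF z] by (simp add: eq_diff_eq add.commute)
  then show "cmod (z^n * H z) \<le> 2 * cmod z^n / (1 - cmod z^n)"
    using Cayley_power_dist_one_le[of n \<omega> z] n le[OF z] z by simp
  have "deriv (\<lambda>z. 1 + z^n * H z) z = deriv (\<lambda>z. (1 + z^n * \<omega> z) / (1 - z^n * \<omega> z)) z"
    by (intro deriv_cong_ev eventually_nhds_ball[OF z]) (auto simp: eq)
  then show "cmod (z * deriv (\<lambda>z. 1 + z^n * H z) z / (1 + z^n * H z)) \<le> 2 * real n * cmod z^n / (1 - cmod z^(2*n))"
    using Cayley_power_logderiv_le[OF n hol le z] eq[OF z] by simp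
qed

section \<open>Bounds for \<open>Q_f\<close>\<close>

lemma Qf_mult:
  assumes holg: "g holomorphic_on ball 0 1" and holp: "p holomorphic_on ball 0 1"
    and w: "w \<in> ball 0 1" "w \<noteq> 0" and nz: "g w \<noteq> 0" "p w \<noteq> 0"
  shows "Qf (\<lambda>z. g z * p z) w = Qf g w + w * deriv p w / p w"
proof -
  have "deriv (\<lambda>z. g z * p z) w = deriv g w * p w + deriv p w * g w"
    by (intro DERIV_imp_deriv DERIV_mult holomorphic_derivI[OF holg open_ball w(1)]
        holomorphic_derivI[OF holp open_ball w(1)])
  then show ?thesis
    using w nz by (simp add: Qf_def field_simps)
qed

lemma Sstar_cls_Qf_eq:
  assumes n: "n \<ge> 1" and g: "g \<in> Sstar_cls n \<alpha>"
  obtains H where "H holomorphic_on ball 0 1" "\<And>w. w \<in> ball 0 1 \<Longrightarrow> Qf g w = 1 + w^n * H w"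
proof -
  have gA: "g \<in> A_cls n" and gnz: "\<And>w. w \<in> ball 0 1 \<Longrightarrow> w \<noteq> 0 \<Longrightarrow> g w \<noteq> 0"
    using g by (auto simp: Sstar_cls_def)
  obtain K where holK: "K holomorphic_on ball 0 1" and gK: "\<And>w. w \<in> ball 0 1 \<Longrightarrow> g w = w + w^(n+1) * K w"
    using A_cls_factor[OF n gA] by blast
  define E where "E w = 1 + w^n * K w" for w
  have gE: "g w = w * E w" if "w \<in> ball 0 1" for w
    using gK[OF that] by (simp add: E_def algebra_simps)
  have Enz: "E w \<noteq> 0" if "w \<in> ball 0 1" for w
    using gnz[OF that] gE[OF that] n by (cases "w = 0") (auto simp: E_def power_0_left)
  define H where "H w = (n * K w + w * deriv K w) / E w" for w
  have "H holomorphic_on ball 0 1"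
    unfolding H_def using Enz unfolding E_def
    by (intro holomorphic_intros holK holomorphic_deriv[OF holK open_ball]) auto
  moreover have "Qf g w = 1 + w^n * H w" if w: "w \<in> ball 0 1" for w
  proof (cases "w = 0")
    case False
    have "deriv g w = deriv (\<lambda>w. w + w^(n+1) * K w) w"
      by (intro deriv_cong_ev eventually_nhds_ball[OF w]) (auto simp: gK)
    also have "\<dots> = 1 + (of_nat (n + 1) * (1 * w^(n + 1 - Suc 0)) * K w + deriv K w * w^(n+1))"
      by (rule DERIV_imp_deriv[OF DERIV_add[OF DERIV_ident
            DERIV_mult[OF DERIV_power[OF DERIV_ident] holomorphic_derivI[OF holK open_ball w]]]])
    finally have "deriv g w = E w + w^n * (n * K w + w * deriv K w)"
      by (simp add: E_def algebra_simps)
    then show ?thesis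
      using False Enz[OF w] by (simp add: Qf_def gE[OF w] H_def field_simps)
  qed (use n in \<open>simp add: Qf_def\<close>)
  ultimately show ?thesis
    using that by blast
qed

lemma Sstar_cls_Qf_bound:
  assumes n: "n \<ge> 1" and \<alpha>: "\<alpha> < 1" and g: "g \<in> Sstar_cls n \<alpha>" and z: "z \<in> ball 0 1"
  shows "cmod (Qf g z - 1) \<le> 2 * (1 - \<alpha>) * cmod z^n / (1 - cmod z^n)"
proof -
  obtain H where holH: "H holomorphic_on ball 0 1" and Q: "\<And>w. w \<in> ball 0 1 \<Longrightarrow> Qf g w = 1 + w^n * H w"
    using Sstar_cls_Qf_eq[OF n g] by blast
  \<comment> \<open>\<open>(Q_g - \<alpha>)/(1 - \<alpha>) = 1 + z^n H/(1 - \<alpha>)\<close> has positive real part.\<close>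
  define H' where "H' w = H w / of_real (1 - \<alpha>)" for w
  have "Re (1 + w^n * H' w) > 0" if "w \<in> ball 0 1" for w
  proof -
    have "1 + w^n * H' w = (Qf g w - of_real \<alpha>) / of_real (1 - \<alpha>)"
      using Q[OF that] \<alpha> by (simp add: H'_def field_simps)
    then show ?thesis
      using g that \<alpha> by (simp add: Sstar_cls_def Re_divide_of_real)
  qed
  moreover have "H' holomorphic_on ball 0 1"
    unfolding H'_def using \<alpha> by (intro holomorphic_intros holH) auto
  ultimately have bound: "cmod (z^n * H' z) \<le> 2 * cmod z^n / (1 - cmod z^n)"
    using Re_pos_power_bounds(1)[OF n _ _ z] by blast
  have "Qf g z - 1 = of_real (1 - \<alpha>) * (z^n * H' z)"
    using Q[OF z] \<alpha> by (simp add: H'_def)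
  moreover have "cmod (complex_of_real (1 - \<alpha>)) = 1 - \<alpha>"
    using \<alpha> by (simp only: norm_of_real)
  ultimately have "cmod (Qf g z - 1) = (1 - \<alpha>) * cmod (z^n * H' z)"
    by (simp only: norm_mult)
  also have "\<dots> \<le> (1 - \<alpha>) * (2 * cmod z^n / (1 - cmod z^n))"
    using bound \<alpha> by (intro mult_left_mono) auto
  finally show ?thesis
    by (simp add: algebra_simps)
qed

definition CSstar_majorant :: "nat \<Rightarrow> real \<Rightarrow> real \<Rightarrow> real" where
  "CSstar_majorant n \<alpha> x = 2 * (1 - \<alpha>) * x / (1 - x) + 2 * real n * x / (1 - x^2)"

lemma CSstar_cls_Qf_bound:
  assumes n: "n \<ge> 1" and \<alpha>: "\<alpha> < 1" and f: "f \<in> CSstar_cls n \<alpha>" and z: "z \<in> ball 0 1"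
  shows "cmod (Qf f z - 1) \<le> CSstar_majorant n \<alpha> (cmod z^n)"
proof (cases "z = 0")
  case True
  then show ?thesis
    using n by (simp add: Qf_def CSstar_majorant_def power_0_left)
next
  case False
  obtain g where g: "g \<in> Sstar_cls n \<alpha>" and p: "(\<lambda>z. if z = 0 then 1 else f z / g z) \<in> P_cls n"
    using f by (auto simp: CSstar_cls_def)
  obtain H where holH: "H holomorphic_on ball 0 1"
    and pH: "\<And>w. w \<in> ball 0 1 \<Longrightarrow> (if w = 0 then 1 else f w / g w) = 1 + w^n * H w"
    using P_cls_factor[OF n p] by blast
  define P where "P w = 1 + w^n * H w" for w
  have re: "Re (1 + w^n * H w) > 0" if "w \<in> ball 0 1" for w
    using p that pH[OF that, symmetric] by (auto simp: P_cls_def)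
  have holg: "g holomorphic_on ball 0 1" and gnz: "\<And>w. w \<in> ball 0 1 \<Longrightarrow> w \<noteq> 0 \<Longrightarrow> g w \<noteq> 0"
    and "g 0 = 0" "f 0 = 0"
    using g f by (auto simp: Sstar_cls_def CSstar_cls_def A_cls_def)
  then have fgP: "f w = g w * P w" if "w \<in> ball 0 1" for w
    using pH[OF that] gnz[OF that] by (cases "w = 0") (auto simp: P_def field_simps)
  have "P z \<noteq> 0"
    using re[OF z] by (metis P_def less_irrefl zero_complex.sel(1))
  have "deriv f z = deriv (\<lambda>w. g w * P w) z"
    by (intro deriv_cong_ev eventually_nhds_ball[OF z]) (auto simp: fgP)
  then have "Qf f z = Qf (\<lambda>w. g w * P w) z"
    using False by (simp add: Qf_def fgP[OF z])
  also have "\<dots> = Qf g z + z * deriv P z / P z"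
    unfolding P_def using holg holH z False gnz[OF z False] \<open>P z \<noteq> 0\<close>
    by (intro Qf_mult) (auto simp: P_def intro!: holomorphic_intros)
  finally have "Qf f z - 1 = (Qf g z - 1) + z * deriv P z / P z"
    by simp
  then have "cmod (Qf f z - 1) \<le> cmod (Qf g z - 1) + cmod (z * deriv P z / P z)"
    by (simp only: norm_triangle_ineq)
  also have "\<dots> \<le> 2 * (1 - \<alpha>) * cmod z^n / (1 - cmod z^n) + 2 * real n * cmod z^n / (1 - cmod z^(2*n))"
    using Sstar_cls_Qf_bound[OF n \<alpha> g z] Re_pos_power_bounds(2)[OF n holH re z]
    by (intro add_mono) (simp_all add: P_def[abs_def])
  finally show ?thesis
    by (simp add: CSstar_majorant_def power_mult mult.commute flip: power_mult)
qed

section \<open>The extremal function\<close>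

definition root_unity :: "nat \<Rightarrow> complex" where
  "root_unity n = exp (2 * of_real pi * \<i> / of_nat n)"

lemma norm_root_unity: "cmod (root_unity n) = 1"
  by (simp add: root_unity_def norm_exp_eq_Re)

lemma root_unity_power_eq_iff:
  assumes "n \<ge> 1"
  shows "root_unity n ^ k = root_unity n ^ j \<longleftrightarrow> k mod n = j mod n"
proof -
  have "root_unity n ^ m = exp (2 * of_real pi * \<i> * of_nat m / of_nat n)" for m
    by (simp add: root_unity_def exp_of_nat_mult[symmetric] mult_ac)
  then show ?thesis
    using complex_root_unity_eq[OF assms] by simp
qed

lemma root_unity_power_self: "n \<ge> 1 \<Longrightarrow> root_unity n ^ n = 1"
  using root_unity_power_eq_iff[of n n 0] by simp

lemma higher_deriv_zero_if_rotation_equivariant: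
  assumes hol: "F holomorphic_on ball 0 1" and u: "cmod u = 1"
    and equiv: "\<And>z. z \<in> ball 0 1 \<Longrightarrow> F (u * z) = u^j * F z"
    and "u^k \<noteq> u^j"
  shows "(deriv ^^ k) F 0 = 0"
proof -
  have "(deriv ^^ k) (\<lambda>w. F (u * w)) 0 = u^k * (deriv ^^ k) F (u * 0)"
    using u by (intro higher_deriv_compose_linear[where S = "ball 0 1", OF hol]) (auto simp: norm_mult)
  then have "u^k * (deriv ^^ k) F 0 = (deriv ^^ k) (\<lambda>w. F (u * w)) 0"
    by simp
  also have "\<dots> = (deriv ^^ k) (\<lambda>w. u^j * F w) 0"
    using equiv by (intro higher_deriv_cong_ev[OF eventually_nhds_ball[of 0 0 1]]) auto
  also have "\<dots> = u^j * (deriv ^^ k) F 0"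
    by (intro higher_deriv_cmult[OF hol]) auto
  finally show ?thesis
    using assms(4) by (metis mult_cancel_right)
qed

lemma A_cls_if_root_unity_equivariant:
  assumes n: "n \<ge> 1" and hol: "F holomorphic_on ball 0 1" and "F 0 = 0" "deriv F 0 = 1"
    and equiv: "\<And>z. z \<in> ball 0 1 \<Longrightarrow> F (root_unity n * z) = root_unity n ^ 1 * F z"
  shows "F \<in> A_cls n"
proof -
  have "(deriv ^^ k) F 0 = 0" if "2 \<le> k" "k \<le> n" for k
  proof (rule higher_deriv_zero_if_rotation_equivariant[OF hol _ equiv])
    have "k mod n \<noteq> 1 mod n"
      using that by (cases "k = n") auto
    then show "root_unity n ^ k \<noteq> root_unity n ^ 1"
      using root_unity_power_eq_iff[OF n] by blast
  qed (rule norm_root_unity)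
  then show ?thesis
    using assms by (simp add: A_cls_def)
qed

lemma Re_inverse_one_minus_gt_half:
  assumes "cmod u < 1"
  shows "Re (1 / (1 - u)) > 1/2"
proof -
  define a b where "a = Re u" and "b = Im u"
  have ab: "a^2 + b^2 < 1"
    using assms by (simp add: a_def b_def abs_square_less_1 flip: cmod_power2)
  then have "a^2 < 1"
    using zero_le_power2[of b] by linarith
  then have "\<bar>a\<bar> < 1"
    by (simp add: abs_square_less_1)
  then have "(1 - a)^2 + b^2 > 0"
    by (simp add: add_pos_nonneg)
  then have "1/2 < (1 - a) / ((1 - a)^2 + b^2)"
    using ab by (simp add: field_simps power2_eq_square)
  also have "\<dots> = Re (1 / (1 - u))"
    by (simp add: Re_divide cmod_power2 a_def b_def)
  finally show ?thesis .
qed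

lemma unit_disc_power:
  assumes "z \<in> ball 0 1" "n \<ge> 1"
  shows "cmod (z^n) < 1" "1 - z^n \<notin> \<real>\<^sub>\<le>\<^sub>0" "1 - z^n \<noteq> 0" "1 + z^n \<noteq> 0"
proof -
  show lt: "cmod (z^n) < 1"
    using assms by (simp add: norm_power power_less_one_iff)
  then have "Re (1 - z^n) > 0"
    using abs_Re_le_cmod[of "z^n"] by simp
  then show "1 - z^n \<notin> \<real>\<^sub>\<le>\<^sub>0" "1 - z^n \<noteq> 0"
    by (auto simp: complex_nonpos_Reals_iff)
  show "1 + z^n \<noteq> 0"
    using lt by (metis add_eq_0_iff norm_minus_cancel norm_one less_irrefl)
qed

definition starlike_extremal :: "nat \<Rightarrow> real \<Rightarrow> complex \<Rightarrow> complex" where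
  "starlike_extremal n \<alpha> z = z * exp (- of_real (2 * (1 - \<alpha>) / n) * Ln (1 - z^n))"

definition Cayley_power :: "nat \<Rightarrow> complex \<Rightarrow> complex" where
  "Cayley_power n z = (1 + z^n) / (1 - z^n)"

definition CSstar_extremal :: "nat \<Rightarrow> real \<Rightarrow> complex \<Rightarrow> complex" where
  "CSstar_extremal n \<alpha> z = starlike_extremal n \<alpha> z * Cayley_power n z"

lemma starlike_extremal_holomorphic: "n \<ge> 1 \<Longrightarrow> starlike_extremal n \<alpha> holomorphic_on ball 0 1"
  unfolding starlike_extremal_def[abs_def] using unit_disc_power by (intro holomorphic_intros) auto

lemma Cayley_power_holomorphic: "n \<ge> 1 \<Longrightarrow> Cayley_power n holomorphic_on ball 0 1"
  unfolding Cayley_power_def[abs_def] using unit_disc_power by (intro holomorphic_intros) auto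

lemma CSstar_extremal_holomorphic: "n \<ge> 1 \<Longrightarrow> CSstar_extremal n \<alpha> holomorphic_on ball 0 1"
  unfolding CSstar_extremal_def[abs_def]
  by (intro holomorphic_intros starlike_extremal_holomorphic Cayley_power_holomorphic)

lemma starlike_extremal_equivariant:
  "n \<ge> 1 \<Longrightarrow> starlike_extremal n \<alpha> (root_unity n * z) = root_unity n ^ 1 * starlike_extremal n \<alpha> z"
  by (simp add: starlike_extremal_def power_mult_distrib root_unity_power_self)

lemma Cayley_power_equivariant:
  "n \<ge> 1 \<Longrightarrow> Cayley_power n (root_unity n * z) = root_unity n ^ 0 * Cayley_power n z"
  by (simp add: Cayley_power_def power_mult_distrib root_unity_power_self)

lemma starlike_extremal_has_field_derivative:
  assumes z: "z \<in> ball 0 1" and n: "n \<ge> 1"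
  shows "(starlike_extremal n \<alpha> has_field_derivative
           exp (- of_real (2 * (1 - \<alpha>) / n) * Ln (1 - z^n)) * (1 + 2 * (1 - \<alpha>) * z^n / (1 - z^n))) (at z)"
proof -
  define c where "c = complex_of_real (2 * (1 - \<alpha>) / n)"
  define E where "E = exp (- c * Ln (1 - z^n))"
  have dE: "((\<lambda>w. exp (- c * Ln (1 - w^n))) has_field_derivative E * (c * n * z^(n - 1) / (1 - z^n))) (at z)"
    using unit_disc_power[OF z n] by (auto intro!: derivative_eq_intros simp: E_def field_simps)
  have "c * n = 2 * (1 - \<alpha>)" and "z * z^(n - 1) = z^n"
    using n by (simp_all add: c_def) (cases n; simp)
  moreover have "E * (c * n * z^(n - 1) / (1 - z^n)) * z = E * ((c * n) * (z * z^(n - 1)) / (1 - z^n))"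
    by (simp add: mult_ac)
  ultimately have "1 * E + E * (c * n * z^(n - 1) / (1 - z^n)) * z = E * (1 + 2 * (1 - \<alpha>) * z^n / (1 - z^n))"
    by (simp add: distrib_left)
  then show ?thesis
    using DERIV_mult[OF DERIV_ident dE] unfolding starlike_extremal_def[abs_def] by (simp add: c_def E_def)
qed

lemma Qf_starlike_extremal:
  assumes "z \<in> ball 0 1" "n \<ge> 1"
  shows "Qf (starlike_extremal n \<alpha>) z = 1 + 2 * (1 - \<alpha>) * z^n / (1 - z^n)"
proof (cases "z = 0")
  case False
  then show ?thesis
    using DERIV_imp_deriv[OF starlike_extremal_has_field_derivative[OF assms]]
    by (simp add: Qf_def starlike_extremal_def)
qed (use assms in \<open>simp add: Qf_def power_0_left\<close>)

lemma starlike_extremal_in_Sstar_cls: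
  assumes n: "n \<ge> 1" and \<alpha>: "\<alpha> < 1"
  shows "starlike_extremal n \<alpha> \<in> Sstar_cls n \<alpha>"
proof -
  have "deriv (starlike_extremal n \<alpha>) 0 = 1"
    using DERIV_imp_deriv[OF starlike_extremal_has_field_derivative[of 0 n \<alpha>]] n by (simp add: power_0_left)
  then have "starlike_extremal n \<alpha> \<in> A_cls n"
    using n starlike_extremal_equivariant[OF n]
    by (intro A_cls_if_root_unity_equivariant starlike_extremal_holomorphic)
      (auto simp: starlike_extremal_def)
  moreover have "Re (Qf (starlike_extremal n \<alpha>) z) > \<alpha>" if z: "z \<in> ball 0 1" for z
  proof -
    have "z^n / (1 - z^n) = 1 / (1 - z^n) - 1"
      using unit_disc_power[OF z n] by (simp add: field_simps)
    then have "Re (Qf (starlike_extremal n \<alpha>) z) = 1 + 2 * (1 - \<alpha>) * (Re (1 / (1 - z^n)) - 1)"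
      using Qf_starlike_extremal[OF z n] by (simp add: times_divide_eq_right[symmetric])
    moreover have "Re (1 / (1 - z^n)) > 1/2"
      using Re_inverse_one_minus_gt_half unit_disc_power[OF z n] by blast
    then have "2 * (1 - \<alpha>) * (Re (1 / (1 - z^n)) - 1) > 2 * (1 - \<alpha>) * (- 1/2)"
      using \<alpha> by (intro mult_strict_left_mono) auto
    moreover have "2 * (1 - \<alpha>) * (- 1/2) = \<alpha> - 1"
      by (simp add: field_simps)
    ultimately show ?thesis
      by linarith
  qed
  ultimately show ?thesis
    by (simp add: Sstar_cls_def starlike_extremal_def)
qed

lemma Cayley_power_logderiv:
  fixes z :: complex
  assumes z: "z \<in> ball 0 1" and n: "n \<ge> 1"
  shows "z * deriv (Cayley_power n) z / Cayley_power n z = 2 * of_nat n * z^n / ((1 - z^n) * (1 + z^n))"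
proof -
  have d: "((\<lambda>w. w^n) has_field_derivative of_nat n * z^(n - 1)) (at z)"
    by (auto intro!: derivative_eq_intros)
  have "z^n \<noteq> 1" "z^n \<noteq> -1"
    using unit_disc_power[OF z n] by (auto simp: add_eq_0_iff)
  then have "z * deriv (Cayley_power n) z / Cayley_power n z
      = 2 * (z * (of_nat n * z^(n - 1))) / ((1 - z^n) * (1 + z^n))"
    unfolding Cayley_power_def[abs_def] by (rule Cayley_logderiv[OF d])
  moreover have "z * (of_nat n * z^(n - 1)) = of_nat n * z^n"
    using n by (cases n) auto
  ultimately show ?thesis
    by (simp add: mult.assoc)
qed

lemma Cayley_power_in_P_cls:
  assumes n: "n \<ge> 1"
  shows "Cayley_power n \<in> P_cls n"
proof -
  have "(deriv ^^ k) (Cayley_power n) 0 = 0" if "1 \<le> k" "k < n" for k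
    using that root_unity_power_eq_iff[OF n, of k 0] Cayley_power_equivariant[OF n]
    by (intro higher_deriv_zero_if_rotation_equivariant[where u = "root_unity n" and j = 0,
          OF Cayley_power_holomorphic[OF n] norm_root_unity]) auto
  moreover have "Re (Cayley_power n z) > 0" if z: "z \<in> ball 0 1" for z
  proof -
    define w where "w = 1 / (1 - z^n)"
    have "Cayley_power n z = 2 * w - 1"
      using unit_disc_power[OF z n] by (simp add: Cayley_power_def w_def field_simps)
    moreover have "Re w > 1/2"
      unfolding w_def using Re_inverse_one_minus_gt_half[OF unit_disc_power(1)[OF z n]] .
    ultimately show ?thesis
      by simp
  qed
  moreover have "Cayley_power n 0 = 1"
    using n by (simp add: Cayley_power_def power_0_left)
  ultimately show ?thesis
    using Cayley_power_holomorphic[OF n] by (simp add: P_cls_def)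
qed

lemma CSstar_extremal_in_CSstar_cls:
  assumes n: "n \<ge> 1" and \<alpha>: "\<alpha> < 1"
  shows "CSstar_extremal n \<alpha> \<in> CSstar_cls n \<alpha>"
proof -
  have "deriv (CSstar_extremal n \<alpha>) 0 = 1"
    using DERIV_imp_deriv[OF DERIV_mult[OF starlike_extremal_has_field_derivative[of 0 n \<alpha>, OF _ n]
        holomorphic_derivI[OF Cayley_power_holomorphic[OF n] open_ball, of 0]]] n
    by (simp add: CSstar_extremal_def[abs_def] power_0_left Cayley_power_def starlike_extremal_def)
  moreover have "CSstar_extremal n \<alpha> (root_unity n * z) = root_unity n ^ 1 * CSstar_extremal n \<alpha> z" for z
    by (simp add: CSstar_extremal_def starlike_extremal_equivariant[OF n] Cayley_power_equivariant[OF n])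
  ultimately have "CSstar_extremal n \<alpha> \<in> A_cls n"
    using n by (intro A_cls_if_root_unity_equivariant CSstar_extremal_holomorphic)
      (auto simp: CSstar_extremal_def starlike_extremal_def)
  moreover have "(\<lambda>z. if z = 0 then 1 else CSstar_extremal n \<alpha> z / starlike_extremal n \<alpha> z) = Cayley_power n"
    using n by (auto simp: fun_eq_iff CSstar_extremal_def starlike_extremal_def Cayley_power_def power_0_left)
  ultimately show ?thesis
    using starlike_extremal_in_Sstar_cls[OF n \<alpha>] Cayley_power_in_P_cls[OF n]
    by (auto simp: CSstar_cls_def intro!: bexI[of _ "starlike_extremal n \<alpha>"])
qed

lemma Qf_CSstar_extremal_of_real:
  assumes n: "n \<ge> 1" and t: "0 < t" "t < 1"
  shows "Qf (CSstar_extremal n \<alpha>) (of_real t) = of_real (1 + CSstar_majorant n \<alpha> (t^n))"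
proof -
  have z: "complex_of_real t \<in> ball 0 1" "complex_of_real t \<noteq> 0"
    using t by auto
  have "Qf (CSstar_extremal n \<alpha>) t = Qf (starlike_extremal n \<alpha>) t + t * deriv (Cayley_power n) t / Cayley_power n t"
    unfolding CSstar_extremal_def[abs_def] using unit_disc_power[OF z(1) n] z
    by (intro Qf_mult starlike_extremal_holomorphic Cayley_power_holomorphic n)
      (auto simp: starlike_extremal_def Cayley_power_def)
  also have "\<dots> = 1 + 2 * (1 - \<alpha>) * t^n / (1 - t^n) + 2 * n * t^n / ((1 - t^n) * (1 + t^n))"
    by (simp add: Qf_starlike_extremal[OF z(1) n] Cayley_power_logderiv[OF z(1) n])
  also have "\<dots> = of_real (1 + CSstar_majorant n \<alpha> (t^n))"
    by (simp add: CSstar_majorant_def algebra_simps power2_eq_square power_mult_distrib)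
  finally show ?thesis .
qed

section \<open>The radius\<close>

lemma quadratic_neg_iff_lt_root:
  fixes A B x :: real
  assumes A: "0 \<le> A" and B: "0 < B" and x: "0 \<le> x"
  shows "A * x^2 + B * x - 1 < 0 \<longleftrightarrow> x < 2 / (B + sqrt (B^2 + 4 * A))"
proof -
  define S where "S = sqrt (B^2 + 4 * A)"
  define x0 where "x0 = 2 / (B + S)"
  have S: "0 \<le> S" "S^2 = B^2 + 4 * A"
    using A by (simp_all add: S_def)
  then have BS: "B + S > 0"
    using B by linarith
  have "A * (2 / D)^2 + B * (2 / D) - 1 = (4 * A + 2 * B * D - D^2) / D^2" if "D \<noteq> 0" for D
    using that by (simp add: field_simps power2_eq_square)
  then have "A * x0^2 + B * x0 - 1 = (4 * A + 2 * B * (B + S) - (B + S)^2) / (B + S)^2"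
    using BS by (simp add: x0_def)
  also have "4 * A + 2 * B * (B + S) - (B + S)^2 = 0"
    using S(2) by (simp add: algebra_simps power2_eq_square)
  finally have root: "A * x0^2 + B * x0 - 1 = 0"
    by simp
  have "(x - x0) * (A * (x + x0) + B) = (A * x^2 + B * x - 1) - (A * x0^2 + B * x0 - 1)"
    by (simp add: algebra_simps power2_eq_square)
  then have "A * x^2 + B * x - 1 = (x - x0) * (A * (x + x0) + B)"
    using root by simp
  moreover have "A * (x + x0) + B > 0"
    using A B x BS by (simp add: x0_def add_nonneg_pos)
  ultimately have "A * x^2 + B * x - 1 < 0 \<longleftrightarrow> x < x0"
    by (simp add: mult_less_0_iff)
  then show ?thesis
    by (simp add: x0_def S_def)
qed

definition CSstar_Ne_root :: "nat \<Rightarrow> real \<Rightarrow> real" where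
  "CSstar_Ne_root n \<alpha> = 2 / (3 * (1 + real n - \<alpha>) + sqrt (9 * (1 + real n - \<alpha>)\<^sup>2 + 4 * (4 - 3 * \<alpha>)))"

lemma CSstar_Ne_root_bounds:
  assumes "\<alpha> < 1"
  shows "0 < CSstar_Ne_root n \<alpha>" "CSstar_Ne_root n \<alpha> < 1"
proof -
  have "0 \<le> 9 * (1 + real n - \<alpha>)\<^sup>2"
    by simp
  moreover have "4 < 4 * (4 - 3 * \<alpha>)"
    using assms by simp
  ultimately have "4 < 9 * (1 + real n - \<alpha>)\<^sup>2 + 4 * (4 - 3 * \<alpha>)"
    by linarith
  then have "2 < sqrt (9 * (1 + real n - \<alpha>)\<^sup>2 + 4 * (4 - 3 * \<alpha>))"
    by (intro real_less_rsqrt) simp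
  moreover have "0 \<le> 3 * (1 + real n - \<alpha>)"
    using assms by simp
  ultimately show "0 < CSstar_Ne_root n \<alpha>" "CSstar_Ne_root n \<alpha> < 1"
    by (simp_all add: CSstar_Ne_root_def)
qed

lemma CSstar_majorant_lt_iff:
  assumes \<alpha>: "\<alpha> < 1" and x: "0 \<le> x" "x < 1"
  shows "CSstar_majorant n \<alpha> x < 2/3 \<longleftrightarrow> x < CSstar_Ne_root n \<alpha>"
proof -
  define Q where "Q = (4 - 3 * \<alpha>) * x^2 + 3 * (1 + real n - \<alpha>) * x - 1"
  define D where "D = 3 * (1 - x^2)"
  have "0 < D"
    using x by (simp add: D_def abs_square_less_1)
  have "(C * x / a + m * x / (a * b)) * (3 * (a * b)) = 3 * C * x * b + 3 * m * x"
    if "a \<noteq> 0" "b \<noteq> 0" for a b C m :: real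
    using that by (simp add: field_simps)
  moreover have "1 - x^2 = (1 - x) * (1 + x)"
    by (simp add: algebra_simps power2_eq_square)
  ultimately have "CSstar_majorant n \<alpha> x * D = 3 * (2 * (1 - \<alpha>)) * x * (1 + x) + 3 * (2 * real n) * x"
    using x by (simp add: CSstar_majorant_def D_def)
  also have "\<dots> = 2/3 * D + 2 * Q"
    by (simp add: D_def Q_def algebra_simps power2_eq_square)
  finally have "CSstar_majorant n \<alpha> x < 2/3 \<longleftrightarrow> Q < 0"
    using \<open>0 < D\<close> mult_less_cancel_right_pos[of D "CSstar_majorant n \<alpha> x" "2/3"] by simp
  also have "\<dots> \<longleftrightarrow> x < CSstar_Ne_root n \<alpha>"
  proof -
    have "(3 * (1 + real n - \<alpha>))^2 = 9 * (1 + real n - \<alpha>)^2"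
      unfolding power_mult_distrib by simp
    then show ?thesis
      using quadratic_neg_iff_lt_root[of "4 - 3 * \<alpha>" "3 * (1 + real n - \<alpha>)" x] \<alpha> x
      unfolding Q_def CSstar_Ne_root_def by simp
  qed
  finally show ?thesis .
qed

lemma CSstar_Qf_image_subset_Omega_Ne:
  assumes n: "n \<ge> 1" and \<alpha>: "\<alpha> < 1" and f: "f \<in> CSstar_cls n \<alpha>" and \<rho>: "\<rho>^n \<le> CSstar_Ne_root n \<alpha>"
  shows "Qf f ` ball 0 \<rho> \<subseteq> Omega_Ne"
proof clarify
  fix z :: complex assume "z \<in> ball 0 \<rho>"
  then have "cmod z ^ n < \<rho>^n"
    using n by (intro power_strict_mono) auto
  then have "cmod z ^ n < CSstar_Ne_root n \<alpha>"
    using \<rho> by linarith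
  moreover have "CSstar_Ne_root n \<alpha> < 1"
    using CSstar_Ne_root_bounds[OF \<alpha>] by blast
  ultimately have zn: "cmod z ^ n < CSstar_Ne_root n \<alpha>" "cmod z ^ n < 1"
    by auto
  then have z: "z \<in> ball 0 1"
    using power_less_imp_less_base[of "cmod z" n 1] by simp
  have "cmod (Qf f z - 1) \<le> CSstar_majorant n \<alpha> (cmod z ^ n)"
    by (rule CSstar_cls_Qf_bound[OF n \<alpha> f z])
  also have "\<dots> < 2/3"
    using CSstar_majorant_lt_iff[where n = n and x = "cmod z ^ n", OF \<alpha>] zn by simp
  finally show "Qf f z \<in> Omega_Ne"
    by (rule Omega_Ne_contains_disc)
qed

lemma Qf_CSstar_extremal_notin_Omega_Ne:
  assumes n: "n \<ge> 1" and \<alpha>: "\<alpha> < 1" and t: "0 < t" "t < 1" "CSstar_Ne_root n \<alpha> \<le> t^n"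
  shows "Qf (CSstar_extremal n \<alpha>) (of_real t) \<notin> Omega_Ne"
proof
  assume "Qf (CSstar_extremal n \<alpha>) (of_real t) \<in> Omega_Ne"
  then have "1 + CSstar_majorant n \<alpha> (t^n) < 5/3"
    using Omega_Ne_real_lt Qf_CSstar_extremal_of_real[OF n t(1,2)] by fastforce
  moreover have "\<not> CSstar_majorant n \<alpha> (t^n) < 2/3"
    using CSstar_majorant_lt_iff[where n = n and x = "t^n", OF \<alpha>] t n by (simp add: power_less_one_iff)
  ultimately show False
    by linarith
qed

definition CSstar_Ne_radius :: "nat \<Rightarrow> real \<Rightarrow> real" where
  "CSstar_Ne_radius n \<alpha> = CSstar_Ne_root n \<alpha> powr (1 / n)"

lemma CSstar_Ne_radius_bounds:
  assumes n: "n \<ge> 1" and \<alpha>: "\<alpha> < 1"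
  shows "CSstar_Ne_radius n \<alpha> ^ n = CSstar_Ne_root n \<alpha>" "0 < CSstar_Ne_radius n \<alpha>" "CSstar_Ne_radius n \<alpha> < 1"
proof -
  have root: "0 < CSstar_Ne_root n \<alpha>" "CSstar_Ne_root n \<alpha> < 1"
    using CSstar_Ne_root_bounds[OF \<alpha>] by auto
  then show rn: "CSstar_Ne_radius n \<alpha> ^ n = CSstar_Ne_root n \<alpha>"
    using n by (simp add: CSstar_Ne_radius_def powr_powr flip: powr_realpow)
  then show "0 < CSstar_Ne_radius n \<alpha>" "CSstar_Ne_radius n \<alpha> < 1"
    using root power_less_imp_less_base[of "CSstar_Ne_radius n \<alpha>" n 1] by (auto simp: CSstar_Ne_radius_def)
qed

lemma CSstar_Ne_radius_sharp:
  assumes n: "n \<ge> 1" and \<alpha>: "\<alpha> < 1" and \<rho>: "CSstar_Ne_radius n \<alpha> < \<rho>"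
  shows "\<exists>f\<in>CSstar_cls n \<alpha>. \<not> Qf f ` ball 0 \<rho> \<subseteq> Omega_Ne"
proof
  show "CSstar_extremal n \<alpha> \<in> CSstar_cls n \<alpha>"
    by (rule CSstar_extremal_in_CSstar_cls[OF n \<alpha>])
  note r = CSstar_Ne_radius_bounds[OF n \<alpha>]
  have "complex_of_real (CSstar_Ne_radius n \<alpha>) \<in> ball 0 \<rho>"
    using r \<rho> by simp
  moreover have "Qf (CSstar_extremal n \<alpha>) (of_real (CSstar_Ne_radius n \<alpha>)) \<notin> Omega_Ne"
    using Qf_CSstar_extremal_notin_Omega_Ne[OF n \<alpha> r(2,3)] r(1) by simp
  ultimately show "\<not> Qf (CSstar_extremal n \<alpha>) ` ball 0 \<rho> \<subseteq> Omega_Ne"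
    by blast
qed

theorem mainTheorem10:
  fixes n :: nat and \<alpha> :: real
  assumes "n \<ge> 1" and "0 \<le> \<alpha>" and "\<alpha> < 1"
  shows "radius_Ne (CSstar_cls n \<alpha>) =
           (2 / (3 * (1 + real n - \<alpha>) + sqrt (9 * (1 + real n - \<alpha>)\<^sup>2 + 4 * (4 - 3 * \<alpha>))))
             powr (1 / real n)
       \<and> (\<forall>\<rho>. (2 / (3 * (1 + real n - \<alpha>) + sqrt (9 * (1 + real n - \<alpha>)\<^sup>2 + 4 * (4 - 3 * \<alpha>))))
               powr (1 / real n) < \<rho> \<and> \<rho> \<le> 1 \<longrightarrow>
             (\<exists>f\<in>CSstar_cls n \<alpha>. \<not> Qf f ` ball 0 \<rho> \<subseteq> Omega_Ne))"
proof -
  note n = assms(1) and \<alpha> = assms(3)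
  note r = CSstar_Ne_radius_bounds[OF n \<alpha>]
  have "radius_Ne (CSstar_cls n \<alpha>) = CSstar_Ne_radius n \<alpha>"
    unfolding radius_Ne_def
  proof (rule Greatest_equality)
    show "0 < CSstar_Ne_radius n \<alpha> \<and> CSstar_Ne_radius n \<alpha> \<le> 1
        \<and> (\<forall>f\<in>CSstar_cls n \<alpha>. Qf f ` ball 0 (CSstar_Ne_radius n \<alpha>) \<subseteq> Omega_Ne)"
      using r CSstar_Qf_image_subset_Omega_Ne[OF n \<alpha>] by auto
  qed (use CSstar_Ne_radius_sharp[OF n \<alpha>] in \<open>meson not_le\<close>)
  then show ?thesis
    using CSstar_Ne_radius_sharp[OF n \<alpha>] unfolding CSstar_Ne_radius_def CSstar_Ne_root_def by blast
qed

end
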